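(* Consider a seller with one item and a single ex-interim rational buyer; the item's quality $q\in Q=[q_1,q_2]$ has density $g$ and is observed only by the seller; the buyer's valuation is $v(q)\ge0$, monotone increasing in $q$. Consider the problem of maximizing $Rev_{sig}(\pi,p)=p\int_Q\pi(q)g(q)\,\mathrm{d}q$ over $\pi:Q\to[0,1]$ and $p$ subject to $\int_Q\pi(q)[v(q)-p]g(q)\,\mathrm{d}q\ge0$ and $\int_Q\pi(q)[v(q)-p]g(q)\,\mathrm{d}q\ge\mathbb{E}_{q}[v(q)]-p$. Then $\pi^*(q)=1$ for all $q\in Q$ and $p^*=\mathbb{E}_q[v(q)]$ form an optimal solution.
   Context: $\pi(q)$ is the probability that the seller sends signal 1 ("buy") at quality $q$, and signal 0 ("not buy") otherwise; the constraints express obedience of an ex-interim rational buyer, who buys iff his posterior expected valuation of the item is at least $p$. $\mathbb{E}_q$ denotes expectation under the prior density $g$. *)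

theory Defs
  imports "HOL-Analysis.Analysis"
begin

definition expect_q :: "real \<Rightarrow> real \<Rightarrow> (real \<Rightarrow> real) \<Rightarrow> (real \<Rightarrow> real) \<Rightarrow> real" where
  "expect_q q1 q2 g f = (LINT q:{q1..q2}|lborel. f q * g q)"

definition Rev_sig :: "real \<Rightarrow> real \<Rightarrow> (real \<Rightarrow> real) \<Rightarrow> (real \<Rightarrow> real) \<Rightarrow> real \<Rightarrow> real" where
  "Rev_sig q1 q2 g \<pi> p = p * (LINT q:{q1..q2}|lborel. \<pi> q * g q)"

definition feasible_sig :: "real \<Rightarrow> real \<Rightarrow> (real \<Rightarrow> real) \<Rightarrow> (real \<Rightarrow> real) \<Rightarrow> (real \<Rightarrow> real) \<Rightarrow> real \<Rightarrow> bool" where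
  "feasible_sig q1 q2 g v \<pi> p \<longleftrightarrow>
     set_borel_measurable lborel {q1..q2} \<pi> \<and>
     (\<forall>q\<in>{q1..q2}. 0 \<le> \<pi> q \<and> \<pi> q \<le> 1) \<and>
     (LINT q:{q1..q2}|lborel. \<pi> q * (v q - p) * g q) \<ge> 0 \<and>
     (LINT q:{q1..q2}|lborel. \<pi> q * (v q - p) * g q) \<ge> expect_q q1 q2 g v - p"

end

theory Submission
  imports Defs
begin

text \<open>For any feasible scheme, obedience after the signal ``buy'' gives
  \<open>p \<integral>\<pi> g \<le> \<integral>\<pi> v g\<close>, and since \<open>0 \<le> \<pi> \<le> 1\<close> and \<open>v, g \<ge> 0\<close> this is at most
  \<open>\<integral>v g = \<bbbE>[v]\<close>. Always recommending to buy at price \<open>\<bbbE>[v]\<close> makes both obedience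
  constraints hold with equality and earns exactly \<open>\<bbbE>[v]\<close>. Monotonicity of \<open>v\<close> serves
  only to make \<open>v\<close> measurable and bounded on \<open>Q\<close>, hence \<open>v g\<close> integrable.\<close>

lemma set_borel_measurable_mult:
  fixes f g :: "'a \<Rightarrow> real"
  assumes "set_borel_measurable M A f" "set_borel_measurable M A g"
  shows "set_borel_measurable M A (\<lambda>x. f x * g x)"
proof -
  have "(\<lambda>x. indicator A x *\<^sub>R (f x * g x)) = (\<lambda>x. (indicator A x *\<^sub>R f x) * (indicator A x *\<^sub>R g x))"
    by (auto simp: indicator_def)
  with assms show ?thesis
    unfolding set_borel_measurable_def by (simp only:) (rule borel_measurable_times)
qed

lemma set_borel_measurable_mono_on:
  fixes f :: "real \<Rightarrow> real"
  assumes "mono_on A f" "A \<in> sets borel"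
  shows "set_borel_measurable lborel A f"
proof -
  have "sets (restrict_space lborel A) = sets (restrict_space borel A)"
    by (rule sets_restrict_space_cong) simp
  then have "f \<in> borel_measurable (restrict_space lborel A)"
    using borel_measurable_mono_on_fnc[OF assms(1)] measurable_cong_sets[OF _ refl] by blast
  with assms(2) show ?thesis
    unfolding set_borel_measurable_def
    by (subst (asm) borel_measurable_restrict_space_iff) (auto simp: sets_lborel)
qed

lemma set_integrable_bounded_mult:
  fixes h g :: "'a \<Rightarrow> real"
  assumes g: "set_integrable M A g"
    and h: "set_borel_measurable M A h"
    and bound: "\<And>x. x \<in> A \<Longrightarrow> \<bar>h x\<bar> \<le> C"
  shows "set_integrable M A (\<lambda>x. h x * g x)"
proof (rule set_integrable_bound[where f="\<lambda>x. C * g x"])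
  show "set_integrable M A (\<lambda>x. C * g x)"
    using g by simp
  have "set_borel_measurable M A g"
    using g unfolding set_integrable_def set_borel_measurable_def
    by (rule borel_measurable_integrable)
  with h show "set_borel_measurable M A (\<lambda>x. h x * g x)"
    by (rule set_borel_measurable_mult)
  show "AE x in M. x \<in> A \<longrightarrow> norm (h x * g x) \<le> norm (C * g x)"
  proof (rule AE_I2, rule impI)
    fix x assume "x \<in> A"
    with bound have "\<bar>h x\<bar> \<le> C" "0 \<le> C" by force+
    then show "norm (h x * g x) \<le> norm (C * g x)"
      by (simp add: abs_mult mult_right_mono)
  qed
qed

lemma set_integrable_mono_on_Icc_mult:
  fixes v g :: "real \<Rightarrow> real"
  assumes "mono_on {a..b} v" "set_integrable lborel {a..b} g"
  shows "set_integrable lborel {a..b} (\<lambda>x. v x * g x)"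
proof (rule set_integrable_bounded_mult[OF assms(2)])
  show "set_borel_measurable lborel {a..b} v"
    using assms(1) by (rule set_borel_measurable_mono_on) simp
  fix x assume "x \<in> {a..b}"
  then have "v a \<le> v x" "v x \<le> v b"
    using assms(1) by (auto simp: mono_on_def)
  then show "\<bar>v x\<bar> \<le> max \<bar>v a\<bar> \<bar>v b\<bar>"
    by linarith
qed

lemma obedience_price_bound:
  fixes \<pi> v g :: "'a \<Rightarrow> real"
  assumes "set_integrable M A (\<lambda>q. \<pi> q * g q)" "set_integrable M A (\<lambda>q. \<pi> q * v q * g q)"
    and "(LINT q:A|M. \<pi> q * (v q - p) * g q) \<ge> 0"
  shows "p * (LINT q:A|M. \<pi> q * g q) \<le> (LINT q:A|M. \<pi> q * v q * g q)"
proof -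
  have "(LINT q:A|M. \<pi> q * (v q - p) * g q) = (LINT q:A|M. \<pi> q * v q * g q - p * (\<pi> q * g q))"
    by (simp add: algebra_simps)
  also have "\<dots> = (LINT q:A|M. \<pi> q * v q * g q) - p * (LINT q:A|M. \<pi> q * g q)"
    using assms(1,2) by (simp add: set_integral_diff)
  finally show ?thesis
    using assms(3) by linarith
qed

lemma set_integral_mult_le_one_le:
  fixes \<pi> f :: "'a \<Rightarrow> real"
  assumes "set_integrable M A (\<lambda>q. \<pi> q * f q)" "set_integrable M A f"
    and "\<And>q. q \<in> A \<Longrightarrow> \<pi> q \<le> 1" "\<And>q. q \<in> A \<Longrightarrow> 0 \<le> f q"
  shows "(LINT q:A|M. \<pi> q * f q) \<le> (LINT q:A|M. f q)"
proof (rule set_integral_mono[OF assms(1,2)])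
  fix q assume "q \<in> A"
  with assms(3,4) show "\<pi> q * f q \<le> f q"
    using mult_right_mono[of "\<pi> q" 1 "f q"] by simp
qed

lemma Rev_sig_le_expect_q:
  fixes g v \<pi> :: "real \<Rightarrow> real"
  assumes feasible: "feasible_sig q1 q2 g v \<pi> p"
    and g_nonneg: "\<forall>q\<in>{q1..q2}. 0 \<le> g q"
    and g_int: "set_integrable lborel {q1..q2} g"
    and v_nonneg: "\<forall>q\<in>{q1..q2}. 0 \<le> v q"
    and v_meas: "set_borel_measurable lborel {q1..q2} v"
    and vg_int: "set_integrable lborel {q1..q2} (\<lambda>q. v q * g q)"
  shows "Rev_sig q1 q2 g \<pi> p \<le> expect_q q1 q2 g v"
proof -
  have \<pi>_meas: "set_borel_measurable lborel {q1..q2} \<pi>"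
    and \<pi>_range: "\<forall>q\<in>{q1..q2}. 0 \<le> \<pi> q \<and> \<pi> q \<le> 1"
    and obedient: "(LINT q:{q1..q2}|lborel. \<pi> q * (v q - p) * g q) \<ge> 0"
    using feasible unfolding feasible_sig_def by auto
  have \<pi>g_int: "set_integrable lborel {q1..q2} (\<lambda>q. \<pi> q * g q)"
    using \<pi>_range by (intro set_integrable_bounded_mult[OF g_int \<pi>_meas, of 1]) auto
  have \<pi>vg_int: "set_integrable lborel {q1..q2} (\<lambda>q. \<pi> q * (v q * g q))"
    using \<pi>_range by (intro set_integrable_bounded_mult[OF vg_int \<pi>_meas, of 1]) auto
  have "Rev_sig q1 q2 g \<pi> p \<le> (LINT q:{q1..q2}|lborel. \<pi> q * v q * g q)"
    unfolding Rev_sig_def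
    using \<pi>g_int \<pi>vg_int obedient by (intro obedience_price_bound) (simp_all add: mult.assoc)
  also have "\<dots> \<le> (LINT q:{q1..q2}|lborel. v q * g q)"
    using \<pi>vg_int vg_int \<pi>_range g_nonneg v_nonneg
    by (subst mult.assoc, intro set_integral_mult_le_one_le) auto
  finally show ?thesis
    unfolding expect_q_def .
qed

lemma Rev_sig_always_buy:
  assumes "(LINT q:{q1..q2}|lborel. g q) = 1"
  shows "Rev_sig q1 q2 g (\<lambda>_. 1) p = p"
  using assms unfolding Rev_sig_def by simp

lemma feasible_sig_always_buy:
  fixes g v :: "real \<Rightarrow> real"
  assumes g_int: "set_integrable lborel {q1..q2} g"
    and g_density: "(LINT q:{q1..q2}|lborel. g q) = 1"
    and vg_int: "set_integrable lborel {q1..q2} (\<lambda>q. v q * g q)"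
  shows "feasible_sig q1 q2 g v (\<lambda>_. 1) (expect_q q1 q2 g v)"
proof -
  let ?E = "expect_q q1 q2 g v"
  have "(LINT q:{q1..q2}|lborel. 1 * (v q - ?E) * g q) = (LINT q:{q1..q2}|lborel. v q * g q - ?E * g q)"
    by (simp add: algebra_simps)
  also have "\<dots> = ?E - ?E * 1"
    using vg_int g_int g_density by (simp add: set_integral_diff expect_q_def)
  finally have "(LINT q:{q1..q2}|lborel. 1 * (v q - ?E) * g q) = 0"
    by simp
  then show ?thesis
    unfolding feasible_sig_def by (simp add: set_borel_measurable_def)
qed

theorem mainTheorem6:
  fixes q1 q2 :: real and g v :: "real \<Rightarrow> real"
  assumes "q1 < q2"
    and g_nonneg: "\<forall>q\<in>{q1..q2}. 0 \<le> g q"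
    and g_int: "set_integrable lborel {q1..q2} g"
    and g_density: "(LINT q:{q1..q2}|lborel. g q) = 1"
    and v_nonneg: "\<forall>q\<in>{q1..q2}. 0 \<le> v q"
    and v_mono: "mono_on {q1..q2} v"
  shows "feasible_sig q1 q2 g v (\<lambda>_. 1) (expect_q q1 q2 g v) \<and>
         (\<forall>\<pi> p. feasible_sig q1 q2 g v \<pi> p \<longrightarrow>
            Rev_sig q1 q2 g \<pi> p \<le> Rev_sig q1 q2 g (\<lambda>_. 1) (expect_q q1 q2 g v))"
proof -
  have v_meas: "set_borel_measurable lborel {q1..q2} v"
    using v_mono by (rule set_borel_measurable_mono_on) simp
  have vg_int: "set_integrable lborel {q1..q2} (\<lambda>q. v q * g q)"
    using v_mono g_int by (rule set_integrable_mono_on_Icc_mult)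
  show ?thesis
    using feasible_sig_always_buy[OF g_int g_density vg_int]
      Rev_sig_le_expect_q[OF _ g_nonneg g_int v_nonneg v_meas vg_int]
    by (simp add: Rev_sig_always_buy[OF g_density])
qed

end
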